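(* Let $v_1,\dots,v_n\in\mathbb{R}^d$, $x\in[0,1]^n$ with $\sum_i x(i)=q$, and $X=\sum_i x(i)v_iv_i^\top$ with $\lambda_{\min}(X)>0$; let $\lambda_{\mathrm{avg}}(X)=\operatorname{tr}(X)/d$. Let $S\subseteq[n]$ with $|S|=b$, $Z=\sum_{i\in S}v_iv_i^\top$, and $0<\varepsilon<\frac12$. Set $\alpha=\frac{\sqrt d}{\varepsilon\lambda_{\min}(X)}$, let $A=(\alpha Z-\ell I)^{-2}$ where $\ell\in\mathbb{R}$ is the unique scalar with $\alpha Z-\ell I\succ0$ and $\operatorname{tr}(A)=1$, let $S'=\{i\in S:2\alpha\langle v_iv_i^\top,A^{1/2}\rangle<1\}$ and \[ \Phi(i,j)=\frac{\langle v_jv_j^\top,A\rangle}{1+2\alpha\langle v_jv_j^\top,A^{1/2}\rangle}-\frac{\langle v_iv_i^\top,A\rangle}{1-2\alpha\langle v_iv_i^\top,A^{1/2}\rangle}. \] If $\lambda_{\min}(Z)\le(1-2\varepsilon)\lambda_{\min}(X)$ and $b\ge q+2\big(d+\frac d\varepsilon\big)+\frac{2d}{\varepsilon}\sqrt{\frac{\lambda_{\mathrm{avg}}(X)}{\lambda_{\min}(X)}}$, then there exist $i\in S'$ and $j\in[n]\setminus S$ with $\Phi(i,j)\ge\frac{\varepsilon}{b}\lambda_{\min}(X)$ (equivalently, $\max_{i\in S',\,j\in[n]\setminus S}\Phi(i,j)\ge\frac\varepsilon b\lambda_{\min}(X)$).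
   Context: For symmetric matrices $\langle A,B\rangle=\operatorname{tr}(AB)$. *)

theory Defs
  imports "HOL-Analysis.Analysis"
begin

text \<open>Real symmetric d x d matrices, with d = CARD('d).\<close>

definition sym_mat :: "real^'d^'d \<Rightarrow> bool" where
  "sym_mat M \<longleftrightarrow> transpose M = M"

definition psd :: "real^'d^'d \<Rightarrow> bool" where
  "psd M \<longleftrightarrow> sym_mat M \<and> (\<forall>x. 0 \<le> x \<bullet> (M *v x))"

definition pd :: "real^'d^'d \<Rightarrow> bool" where
  "pd M \<longleftrightarrow> sym_mat M \<and> (\<forall>x. x \<noteq> 0 \<longrightarrow> 0 < x \<bullet> (M *v x))"

definition eigenvalues :: "real^'d^'d \<Rightarrow> real set" where
  "eigenvalues M = {c. \<exists>v. v \<noteq> 0 \<and> M *v v = c *\<^sub>R v}"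

definition lambda_min :: "real^'d^'d \<Rightarrow> real" where
  "lambda_min M = Min (eigenvalues M)"

definition lambda_avg :: "real^'d^'d \<Rightarrow> real" where
  "lambda_avg M = trace M / real CARD('d)"

definition mat_inner :: "real^'d^'d \<Rightarrow> real^'d^'d \<Rightarrow> real" where
  "mat_inner M N = trace (M ** N)"

definition outer :: "real^'d \<Rightarrow> real^'d^'d" where
  "outer v = (\<chi> i j. v $ i * v $ j)"

definition psd_sqrt :: "real^'d^'d \<Rightarrow> real^'d^'d" where
  "psd_sqrt M = (THE B. psd B \<and> B ** B = M)"

end

theory Submission
  imports Defs
begin

text \<open>
  Put B = \<alpha> Z - l I, so that A = B^-2, the square root of A is B^-1, and tr A = 1 says that
  B^-1 has unit Frobenius norm. Hence tr B^-1 \<le> \<surd>d and every eigenvalue of B is at least 1,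
  i.e. l \<le> \<alpha> lambda_min(Z) - 1. With a_i = \<langle>v_i v_i^T, A\<rangle> and r_i = \<langle>v_i v_i^T, B^-1\<rangle>,
  the identities \<alpha> \<Sum>_S a_i = tr B^-1 + l and \<alpha> \<Sum>_S r_i = d + l tr B^-1 then give
  \<Sum>_S a_i \<le> (1 - \<epsilon>) lambda_min(X) and 2 \<alpha> \<Sum>_S r_i \<le> 2d/\<epsilon> - 2d, while
  \<langle>X, A\<rangle> \<ge> lambda_min(X) tr A gives \<Sum>_i x_i a_i \<ge> lambda_min(X).

  Let \<gamma> be the least ratio a_i / (1 - 2 \<alpha> r_i) over S' and \<kappa> the largest ratio
  a_j / (1 + 2 \<alpha> r_j) outside S. Bounding a_i from below through \<gamma> on S, a_j from above
  through \<kappa> outside S, and the outside r-mass by Cauchy-Schwarz (r_j \<le> |v_j| \<surd>a_j), the lower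
  bound on b turns \<Sum>_i x_i a_i \<ge> lambda_min(X) into (\<kappa> - \<gamma>) b \<ge> \<epsilon> lambda_min(X).
\<close>

section \<open>Symmetric matrices and their least eigenvalue\<close>

lemma sym_mat_iff_entries: "sym_mat M \<longleftrightarrow> (\<forall>i j. M$i$j = M$j$i)"
  unfolding sym_mat_def transpose_def vec_eq_iff by auto

lemma sym_mat_adjoint: "sym_mat M \<Longrightarrow> x \<bullet> (M *v y) = (M *v x) \<bullet> y"
  by (metis dot_lmul_matrix transpose_matrix_vector sym_mat_def)

lemma nonneg_quadratic_imp_linear_coeff_eq_0:
  fixes b c :: real
  assumes nonneg: "\<And>t. 0 \<le> b * t + c * t\<^sup>2"
  shows "b = 0"
proof -
  have c: "0 \<le> c" using nonneg[of 1] nonneg[of "-1"] by simp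
  define t where "t = - b / (c + 1)"
  have b: "b = - (c + 1) * t" using c by (simp add: t_def field_simps)
  have "b * t + c * t\<^sup>2 = - t\<^sup>2" unfolding b by (simp add: algebra_simps power2_eq_square)
  then have "t = 0" using nonneg[of t] by simp
  then show "b = 0" using b by simp
qed

lemma psd_mult_eq_0_if_quadratic_form_eq_0:
  fixes P :: "real^'d^'d"
  assumes P: "psd P" and x: "x \<bullet> (P *v x) = 0"
  shows "P *v x = 0"
proof -
  define w where "w = P *v x"
  have "0 \<le> (2 * (w \<bullet> w)) * t + (w \<bullet> (P *v w)) * t\<^sup>2" for t
  proof -
    have "x \<bullet> (P *v w) = w \<bullet> w" "w \<bullet> (P *v x) = w \<bullet> w"
      using P by (simp_all add: psd_def sym_mat_adjoint w_def)
    then have "(x + t *\<^sub>R w) \<bullet> (P *v (x + t *\<^sub>R w)) = (2 * (w \<bullet> w)) * t + (w \<bullet> (P *v w)) * t\<^sup>2"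
      using x by (simp add: inner_commute algebra_simps power2_eq_square)
    then show ?thesis using P by (metis psd_def)
  qed
  then have "2 * (w \<bullet> w) = 0" by (rule nonneg_quadratic_imp_linear_coeff_eq_0)
  then show ?thesis by (simp add: w_def)
qed

lemma sym_mat_eq_0_if_quadratic_form_eq_0:
  fixes M :: "real^'d^'d"
  assumes "sym_mat M" and "\<And>x. x \<bullet> (M *v x) = 0"
  shows "M = 0"
  using assms psd_mult_eq_0_if_quadratic_form_eq_0[of M] by (simp add: psd_def matrix_eq)

lemma sym_mat_min_rayleigh_eigenpair:
  fixes M :: "real^'d^'d"
  assumes M: "sym_mat M"
  obtains u c where "u \<noteq> 0" "M *v u = c *\<^sub>R u" "\<And>y. c * (y \<bullet> y) \<le> y \<bullet> (M *v y)"
proof -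
  have "continuous_on (sphere 0 1) (\<lambda>y. y \<bullet> (M *v y))"
    by (intro continuous_intros linear_continuous_on bounded_linear_intros)
  moreover have "sphere (0::real^'d) 1 \<noteq> {}" by simp
  ultimately obtain u where u: "u \<in> sphere 0 1"
    and u_min: "\<And>y. y \<in> sphere 0 1 \<Longrightarrow> u \<bullet> (M *v u) \<le> y \<bullet> (M *v y)"
    using continuous_attains_inf[OF compact_sphere] by blast
  define c where "c = u \<bullet> (M *v u)"
  have rayleigh: "c * (y \<bullet> y) \<le> y \<bullet> (M *v y)" for y
  proof (cases "y = 0")
    case False
    have "c \<le> (y /\<^sub>R norm y) \<bullet> (M *v (y /\<^sub>R norm y))"
      using u_min[of "y /\<^sub>R norm y"] False by (simp add: c_def)
    also have "\<dots> = (y \<bullet> (M *v y)) / (norm y)\<^sup>2"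
      using False by (simp add: matrix_vector_mult_scaleR field_simps power2_eq_square)
    finally show ?thesis using False by (simp add: field_simps power2_norm_eq_inner)
  qed simp
  define P where "P = M - c *\<^sub>R mat 1"
  have P_mult: "P *v y = M *v y - c *\<^sub>R y" for y
    by (simp add: P_def matrix_vector_mult_diff_rdistrib scaleR_matrix_vector_assoc[symmetric])
  have "sym_mat P" using M by (simp add: P_def sym_mat_iff_entries mat_def)
  moreover have "0 \<le> y \<bullet> (P *v y)" for y
    using rayleigh[of y] by (simp add: P_mult inner_diff_right)
  ultimately have "psd P" by (simp add: psd_def)
  moreover have "u \<bullet> (P *v u) = 0"
    using u by (simp add: P_mult inner_diff_right c_def power2_norm_eq_inner[symmetric])
  ultimately have "P *v u = 0" by (rule psd_mult_eq_0_if_quadratic_form_eq_0)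
  then have "M *v u = c *\<^sub>R u" by (simp add: P_mult)
  moreover have "u \<noteq> 0" using u by auto
  ultimately show ?thesis using rayleigh that by blast
qed

lemma sym_mat_finite_eigenvalues:
  fixes M :: "real^'d^'d"
  assumes M: "sym_mat M"
  shows "finite (eigenvalues M)"
proof -
  define ev where "ev c = (SOME u. u \<noteq> 0 \<and> M *v u = c *\<^sub>R u)" for c
  have ev: "ev c \<noteq> 0 \<and> M *v ev c = c *\<^sub>R ev c" if "c \<in> eigenvalues M" for c
    using that unfolding eigenvalues_def ev_def mem_Collect_eq by (rule someI_ex)
  have inj: "inj_on ev (eigenvalues M)"
    by (rule inj_onI) (metis ev scaleR_cancel_right)
  have "pairwise orthogonal (ev ` eigenvalues M)"
  proof (rule pairwiseI, clarify)
    fix c c' assume c: "c \<in> eigenvalues M" and c': "c' \<in> eigenvalues M" and ne: "ev c \<noteq> ev c'"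
    have "c \<noteq> c'" using ne by auto
    moreover have "c' * (ev c \<bullet> ev c') = c * (ev c \<bullet> ev c')"
      using sym_mat_adjoint[OF M, of "ev c" "ev c'"] ev[OF c] ev[OF c'] by simp
    ultimately show "orthogonal (ev c) (ev c')" by (simp add: orthogonal_def)
  qed
  moreover have "0 \<notin> ev ` eigenvalues M" using ev by auto
  ultimately have "finite (ev ` eigenvalues M)"
    using pairwise_orthogonal_independent independent_imp_finite by blast
  then show ?thesis using finite_imageD inj by blast
qed

lemma lambda_min_eigenvalue_rayleigh:
  fixes M :: "real^'d^'d"
  assumes M: "sym_mat M"
  shows "lambda_min M \<in> eigenvalues M" and "lambda_min M * (y \<bullet> y) \<le> y \<bullet> (M *v y)"
proof -
  obtain u c where "u \<noteq> 0" "M *v u = c *\<^sub>R u" and rayleigh: "\<And>y. c * (y \<bullet> y) \<le> y \<bullet> (M *v y)"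
    using sym_mat_min_rayleigh_eigenpair[OF M] by blast
  then have c: "c \<in> eigenvalues M" by (auto simp: eigenvalues_def)
  have fin: "finite (eigenvalues M)" using sym_mat_finite_eigenvalues[OF M] .
  show "lambda_min M \<in> eigenvalues M"
    unfolding lambda_min_def using fin c by (auto intro: Min_in)
  have "lambda_min M \<le> c" unfolding lambda_min_def using fin c by simp
  then have "lambda_min M * (y \<bullet> y) \<le> c * (y \<bullet> y)" by (simp add: mult_right_mono)
  then show "lambda_min M * (y \<bullet> y) \<le> y \<bullet> (M *v y)" using rayleigh[of y] by linarith
qed

lemma matrix_vector_mult_uminus: "(- M) *v x = - (M *v x :: real^'m)"
  using matrix_vector_mult_diff_rdistrib[of 0 M x] by simp

lemma sym_mat_eq_0_if_eigenvalues_0: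
  fixes M :: "real^'d^'d"
  assumes M: "sym_mat M" and eig: "\<And>c. c \<in> eigenvalues M \<Longrightarrow> c = 0"
  shows "M = 0"
proof (rule sym_mat_eq_0_if_quadratic_form_eq_0[OF M])
  fix y
  obtain u c where "u \<noteq> 0" "M *v u = c *\<^sub>R u" and rayleigh: "\<And>y. c * (y \<bullet> y) \<le> y \<bullet> (M *v y)"
    using sym_mat_min_rayleigh_eigenpair[OF M] by blast
  then have "c \<in> eigenvalues M" unfolding eigenvalues_def by blast
  then have "c = 0" by (rule eig)
  then have "0 \<le> y \<bullet> (M *v y)" using rayleigh[of y] by simp
  have "sym_mat (- M)" using M by (simp add: sym_mat_iff_entries)
  then obtain u' c' where "u' \<noteq> 0" "(- M) *v u' = c' *\<^sub>R u'"
    and rayleigh': "\<And>y. c' * (y \<bullet> y) \<le> y \<bullet> ((- M) *v y)"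
    using sym_mat_min_rayleigh_eigenpair by blast
  have "M *v u' = - ((- M) *v u')" by (simp add: matrix_vector_mult_uminus)
  also have "\<dots> = (- c') *\<^sub>R u'" using \<open>(- M) *v u' = c' *\<^sub>R u'\<close> by simp
  finally have "- c' \<in> eigenvalues M" using \<open>u' \<noteq> 0\<close> unfolding eigenvalues_def by blast
  then have "- c' = 0" by (rule eig)
  then have "0 \<le> - (y \<bullet> (M *v y))" using rayleigh'[of y] by (simp add: matrix_vector_mult_uminus)
  with \<open>0 \<le> y \<bullet> (M *v y)\<close> show "y \<bullet> (M *v y) = 0" by linarith
qed

lemma sym_mat_outer: "sym_mat (outer w)"
  by (simp add: sym_mat_iff_entries outer_def mult.commute)

lemma sym_mat_sum: "(\<And>i. i \<in> I \<Longrightarrow> sym_mat (M i)) \<Longrightarrow> sym_mat (\<Sum>i\<in>I. M i)"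
  by (simp add: sym_mat_iff_entries)

lemma sym_mat_scaleR: "sym_mat M \<Longrightarrow> sym_mat (c *\<^sub>R M)"
  by (simp add: sym_mat_iff_entries)

section \<open>Inverses and positive semidefinite square roots\<close>

lemma psd_square_root_unique:
  fixes C D :: "real^'d^'d"
  assumes C: "psd C" and D: "psd D" and eq: "C ** C = D ** D"
  shows "C = D"
proof -
  have sym: "sym_mat C" "sym_mat D" using C D by (auto simp: psd_def)
  have "sym_mat (C - D)" using sym by (simp add: sym_mat_iff_entries)
  moreover have "\<mu> = 0" if w: "w \<noteq> 0" "(C - D) *v w = \<mu> *\<^sub>R w" for w \<mu>
  proof (rule ccontr)
    assume "\<mu> \<noteq> 0"
    have Cw: "C *v w = D *v w + \<mu> *\<^sub>R w"
      using w(2) by (simp add: algebra_simps)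
    have "(C *v w) \<bullet> (C *v w) = (D *v w) \<bullet> (D *v w)"
      using sym_mat_adjoint[OF sym(1), of w "C *v w"] sym_mat_adjoint[OF sym(2), of w "D *v w"] eq
      by (simp add: matrix_vector_mul_assoc)
    then have "\<mu> * (w \<bullet> (C *v w) + w \<bullet> (D *v w)) = 0"
      unfolding Cw by (simp add: inner_commute algebra_simps)
    then have "w \<bullet> (C *v w) + w \<bullet> (D *v w) = 0" using \<open>\<mu> \<noteq> 0\<close> by simp
    moreover have "0 \<le> w \<bullet> (C *v w)" "0 \<le> w \<bullet> (D *v w)" using C D by (auto simp: psd_def)
    ultimately have "w \<bullet> (C *v w) = 0" "w \<bullet> (D *v w) = 0" by linarith+
    then have "C *v w = 0" "D *v w = 0"
      using psd_mult_eq_0_if_quadratic_form_eq_0 C D by blast+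
    then have "\<mu> *\<^sub>R w = 0" using Cw by simp
    then show False using w(1) \<open>\<mu> \<noteq> 0\<close> by simp
  qed
  ultimately have "C - D = 0"
    by (intro sym_mat_eq_0_if_eigenvalues_0) (auto simp: eigenvalues_def)
  then show ?thesis by simp
qed

lemma psd_sqrt_eqI:
  assumes "psd C" and "C ** C = M"
  shows "psd_sqrt M = C"
  unfolding psd_sqrt_def using assms psd_square_root_unique by blast

lemma matrix_inv_cancel:
  fixes A :: "'a::semiring_1^'n^'m"
  assumes "invertible A"
  shows "A ** matrix_inv A = mat 1" and "matrix_inv A ** A = mat 1"
  using someI_ex[OF assms[unfolded invertible_def]] by (auto simp: matrix_inv_def)

lemma matrix_inv_unique:
  fixes A :: "'a::semiring_1^'n^'m"
  assumes "invertible A" and "B ** A = mat 1"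
  shows "matrix_inv A = B"
proof -
  have "matrix_inv A = (B ** A) ** matrix_inv A" using assms(2) by simp
  also have "\<dots> = B ** (A ** matrix_inv A)" by (simp add: matrix_mul_assoc)
  finally show ?thesis by (simp add: matrix_inv_cancel(1)[OF assms(1)])
qed

lemma matrix_inv_mult:
  fixes A B :: "'a::semiring_1^'n^'n"
  assumes A: "invertible A" and B: "invertible B"
  shows "matrix_inv (A ** B) = matrix_inv B ** matrix_inv A"
proof (rule matrix_inv_unique)
  show "invertible (A ** B)" using A B by (rule invertible_mult)
  have "matrix_inv B ** matrix_inv A ** (A ** B) = matrix_inv B ** (matrix_inv A ** A) ** B"
    by (simp add: matrix_mul_assoc)
  then show "matrix_inv B ** matrix_inv A ** (A ** B) = mat 1"
    by (simp add: matrix_inv_cancel[OF A] matrix_inv_cancel[OF B])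
qed

lemma pd_imp_invertible:
  fixes B :: "real^'d^'d"
  assumes "pd B"
  shows "invertible B"
proof -
  have "x = 0" if "B *v x = 0" for x
  proof (rule ccontr)
    assume "x \<noteq> 0"
    then have "0 < x \<bullet> (B *v x)" using assms by (simp add: pd_def)
    then show False using that by simp
  qed
  then show ?thesis by (simp add: invertible_left_inverse matrix_left_invertible_ker)
qed

lemma sym_mat_matrix_inv:
  fixes B :: "real^'d^'d"
  assumes B: "sym_mat B" "invertible B"
  shows "sym_mat (matrix_inv B)"
proof -
  have "transpose (matrix_inv B) ** B = transpose (B ** matrix_inv B)"
    using B(1) by (simp add: sym_mat_def matrix_transpose_mul)
  then have "transpose (matrix_inv B) ** B = mat 1"
    by (simp add: matrix_inv_cancel[OF B(2)])
  then have "matrix_inv B = transpose (matrix_inv B)" by (rule matrix_inv_unique[OF B(2)])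
  then show ?thesis unfolding sym_mat_def by (rule sym)
qed

lemma pd_imp_psd_matrix_inv:
  fixes B :: "real^'d^'d"
  assumes B: "pd B"
  shows "psd (matrix_inv B)"
proof -
  have B': "sym_mat B" "invertible B" using B pd_imp_invertible by (auto simp: pd_def)
  have "0 \<le> x \<bullet> (matrix_inv B *v x)" for x
  proof -
    define y where "y = matrix_inv B *v x"
    have "x = B *v y"
      by (simp add: y_def matrix_vector_mul_assoc matrix_inv_cancel[OF B'(2)])
    then have "x \<bullet> (matrix_inv B *v x) = y \<bullet> (B *v y)"
      by (simp add: y_def inner_commute)
    moreover have "0 \<le> y \<bullet> (B *v y)"
      using B unfolding pd_def by (cases "y = 0") (auto intro: less_imp_le)
    ultimately show ?thesis by simp
  qed
  then show ?thesis using sym_mat_matrix_inv[OF B'] by (simp add: psd_def)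
qed

lemma psd_sqrt_matrix_inv_square:
  fixes B :: "real^'d^'d"
  assumes B: "pd B"
  shows "psd_sqrt (matrix_inv (B ** B)) = matrix_inv B"
  using psd_sqrt_eqI[OF pd_imp_psd_matrix_inv[OF B]]
    matrix_inv_mult[OF pd_imp_invertible[OF B] pd_imp_invertible[OF B]] by simp

section \<open>The trace inner product\<close>

lemma mat_inner_outer:
  fixes M :: "real^'d^'d"
  assumes "sym_mat M"
  shows "mat_inner (outer w) M = w \<bullet> (M *v w)"
proof -
  have "mat_inner (outer w) M = (\<Sum>i\<in>UNIV. \<Sum>k\<in>UNIV. w$i * (M$k$i * w$k))"
    by (simp add: mat_inner_def trace_def matrix_matrix_mult_def outer_def algebra_simps)
  also have "\<dots> = w \<bullet> (M *v w)"
    using assms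
    by (simp add: sym_mat_iff_entries inner_vec_def matrix_vector_mult_def sum_distrib_left)
  finally show ?thesis .
qed

lemma mat_inner_add_left: "mat_inner (P + Q) M = mat_inner P M + mat_inner Q M"
  by (simp add: mat_inner_def trace_def matrix_matrix_mult_def sum.distrib algebra_simps)

lemma mat_inner_scaleR_left: "mat_inner (c *\<^sub>R P) M = c * mat_inner P M"
  by (simp add: mat_inner_def trace_def matrix_matrix_mult_def sum_distrib_left mult.assoc)

lemma mat_inner_sum_left: "mat_inner (\<Sum>i\<in>I. P i) M = (\<Sum>i\<in>I. mat_inner (P i) M)"
proof (induct I rule: infinite_finite_induct)
  case (insert i I)
  then show ?case by (simp add: mat_inner_add_left)
qed (simp_all add: mat_inner_def trace_def)

lemma mat_inner_mat_left: "mat_inner (mat c) M = c * trace M"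
  by (simp add: mat_inner_def trace_def matrix_matrix_mult_def mat_def sum_distrib_left
      if_distrib if_distribR cong: if_cong)

lemma trace_mult_transpose: "trace (M ** transpose M) = (\<Sum>k\<in>UNIV. M$k \<bullet> M$k)"
  by (simp add: trace_def matrix_matrix_mult_def transpose_def inner_vec_def)

lemma inner_matrix_vector_le_trace:
  fixes M :: "real^'n^'m"
  shows "(M *v w) \<bullet> (M *v w) \<le> trace (M ** transpose M) * (w \<bullet> w)"
proof -
  have "(M *v w) \<bullet> (M *v w) = (\<Sum>k\<in>UNIV. (M$k \<bullet> w)\<^sup>2)"
    by (simp add: inner_vec_def matrix_vector_mul_component power2_eq_square)
  also have "\<dots> \<le> (\<Sum>k\<in>UNIV. (M$k \<bullet> M$k) * (w \<bullet> w))"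
    by (intro sum_mono Cauchy_Schwarz_ineq)
  finally show ?thesis by (simp add: trace_mult_transpose sum_distrib_right)
qed

lemma trace_le_sqrt_card_mult_trace:
  fixes M :: "real^'n^'n"
  shows "trace M \<le> sqrt CARD('n) * sqrt (trace (M ** transpose M))"
proof -
  have "(trace M)\<^sup>2 \<le> (\<Sum>k\<in>(UNIV::'n set). 1\<^sup>2) * (\<Sum>k\<in>UNIV. (M$k$k)\<^sup>2)"
    using Cauchy_Schwarz_ineq_sum[of "\<lambda>_. 1" "\<lambda>k. M$k$k" UNIV] by (simp add: trace_def)
  also have "\<dots> \<le> CARD('n) * trace (M ** transpose M)"
    unfolding trace_mult_transpose
    by (auto intro!: sum_mono simp: power2_norm_eq_inner[symmetric] component_le_norm_cart
        abs_le_square_iff[symmetric])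
  finally have "trace M \<le> sqrt (CARD('n) * trace (M ** transpose M))" by (rule real_le_rsqrt)
  then show ?thesis by (simp add: real_sqrt_mult)
qed

lemma mat_inner_mult_transpose_eq:
  "mat_inner X (transpose M ** M) = (\<Sum>k\<in>UNIV. M$k \<bullet> (X *v M$k))"
proof -
  have "mat_inner X (transpose M ** M) = trace ((X ** transpose M) ** M)"
    by (simp add: mat_inner_def matrix_mul_assoc)
  also have "\<dots> = trace (M ** (X ** transpose M))" by (rule trace_mul_sym)
  finally show ?thesis
    by (simp add: trace_def matrix_matrix_mult_def transpose_def inner_vec_def
        matrix_vector_mult_def sum_distrib_left algebra_simps)
qed

lemma lambda_min_mult_trace_le:
  fixes X M :: "real^'d^'d"
  assumes "sym_mat X"
  shows "lambda_min X * trace (M ** transpose M) \<le> mat_inner X (transpose M ** M)"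
  unfolding trace_mult_transpose mat_inner_mult_transpose_eq sum_distrib_left
  by (intro sum_mono lambda_min_eigenvalue_rayleigh(2)[OF assms])

lemma eigenvalue_sq_mult_trace_inverse_ge_1:
  fixes B :: "real^'d^'d"
  assumes B: "invertible B" and w: "w \<noteq> 0" "B *v w = c *\<^sub>R w"
  shows "1 \<le> c\<^sup>2 * trace (matrix_inv B ** transpose (matrix_inv B))"
proof -
  define u where "u = matrix_inv B *v w"
  have "w = matrix_inv B *v (B *v w)"
    by (simp add: matrix_vector_mul_assoc matrix_inv_cancel[OF B])
  then have "w = c *\<^sub>R u" using w(2) by (simp add: u_def matrix_vector_mult_scaleR)
  then have "w \<bullet> w = (c *\<^sub>R u) \<bullet> (c *\<^sub>R u)" by simp
  also have "\<dots> = c\<^sup>2 * (u \<bullet> u)" by (simp add: power2_eq_square)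
  also have "\<dots> \<le> c\<^sup>2 * (trace (matrix_inv B ** transpose (matrix_inv B)) * (w \<bullet> w))"
    unfolding u_def by (intro mult_left_mono inner_matrix_vector_le_trace) simp
  finally have "1 * (w \<bullet> w) \<le> (c\<^sup>2 * trace (matrix_inv B ** transpose (matrix_inv B))) * (w \<bullet> w)"
    by (simp add: mult.assoc)
  then show ?thesis using w(1) by (simp add: mult_le_cancel_right)
qed

lemma psd_trace_nonneg:
  fixes M :: "real^'d^'d"
  assumes "psd M"
  shows "0 \<le> trace M"
proof -
  have "0 \<le> M$k$k" for k
  proof -
    have "0 \<le> axis k 1 \<bullet> (M *v axis k 1)" using assms by (simp add: psd_def)
    then show ?thesis by (simp add: inner_axis' matrix_vector_mul_component inner_axis)
  qed
  then show ?thesis by (simp add: trace_def sum_nonneg)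
qed

lemma trace_sum_outer:
  "trace (\<Sum>i\<in>I. c i *\<^sub>R outer (v i) :: real^'d^'d) = (\<Sum>i\<in>I. c i * (norm (v i))\<^sup>2)"
proof -
  have "trace M = mat_inner M (mat 1)" for M :: "real^'d^'d" by (simp add: mat_inner_def)
  then show ?thesis
    by (simp add: mat_inner_sum_left mat_inner_scaleR_left mat_inner_outer sym_mat_def
        power2_norm_eq_inner)
qed

section \<open>The trace-normalised barrier\<close>

lemma barrier_sum_bounds:
  fixes d \<epsilon> lam \<alpha> t l \<mu> sa sr :: real
  assumes \<epsilon>: "0 < \<epsilon>" "\<epsilon> < 1/2" and lam: "0 < lam" and d: "0 < d"
    and \<alpha>: "\<alpha> = sqrt d / (\<epsilon> * lam)"
    and t: "0 \<le> t" "t \<le> sqrt d"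
    and l: "l \<le> \<alpha> * \<mu> - 1" and \<mu>: "\<mu> \<le> (1 - 2 * \<epsilon>) * lam"
    and sa: "\<alpha> * sa = t + l" and sr: "\<alpha> * sr = d + l * t"
  shows "sa \<le> (1 - \<epsilon>) * lam" and "2 * \<alpha> * sr \<le> 2 * d / \<epsilon> - 2 * d"
proof -
  have "0 < \<alpha>" using \<alpha> \<epsilon> lam d by simp
  have \<alpha>_lam: "\<alpha> * lam = sqrt d / \<epsilon>" using \<alpha> lam by simp
  have "\<alpha> * \<mu> \<le> \<alpha> * ((1 - 2 * \<epsilon>) * lam)" using \<mu> \<open>0 < \<alpha>\<close> by simp
  also have "\<alpha> * ((1 - 2 * \<epsilon>) * lam) = (1 - 2 * \<epsilon>) * (sqrt d / \<epsilon>)"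
    unfolding \<alpha>_lam[symmetric] by (simp add: ac_simps)
  finally have l_le: "l \<le> (1 - 2 * \<epsilon>) * (sqrt d / \<epsilon>) - 1" using l by simp
  have "\<alpha> * ((1 - \<epsilon>) * lam) = (1 - \<epsilon>) * (sqrt d / \<epsilon>)"
    unfolding \<alpha>_lam[symmetric] by (simp add: ac_simps)
  moreover have "(1 - 2 * \<epsilon>) * (sqrt d / \<epsilon>) + sqrt d = (1 - \<epsilon>) * (sqrt d / \<epsilon>)"
    using \<epsilon>(1) by (simp add: field_simps)
  ultimately have "\<alpha> * sa \<le> \<alpha> * ((1 - \<epsilon>) * lam)" using sa t(2) l_le by linarith
  then show "sa \<le> (1 - \<epsilon>) * lam" using \<open>0 < \<alpha>\<close> by simp
  have "l * t \<le> (1 - 2 * \<epsilon>) * d / \<epsilon>"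
  proof (cases "0 \<le> l")
    case True
    then have "l * t \<le> ((1 - 2 * \<epsilon>) * (sqrt d / \<epsilon>)) * sqrt d"
      using t l_le by (intro mult_mono) auto
    also have "\<dots> = (1 - 2 * \<epsilon>) * d / \<epsilon>" using d by simp
    finally show ?thesis .
  next
    case False
    then have "l * t \<le> 0" using t(1) by (simp add: mult_nonpos_nonneg)
    also have "0 \<le> (1 - 2 * \<epsilon>) * d / \<epsilon>" using \<epsilon> d by simp
    finally show ?thesis .
  qed
  moreover have "(1 - 2 * \<epsilon>) * d / \<epsilon> = d / \<epsilon> - 2 * d" using \<epsilon>(1) by (simp add: field_simps)
  moreover have "2 * \<alpha> * sr = 2 * d + 2 * (l * t)" using sr by (simp add: algebra_simps)
  ultimately show "2 * \<alpha> * sr \<le> 2 * d / \<epsilon> - 2 * d" by linarith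
qed

lemma budget_of_size_bound:
  fixes d \<epsilon> lam \<alpha> T q b R :: real
  assumes "0 < \<epsilon>" "0 < lam" "0 < d" "0 \<le> T" and \<alpha>: "\<alpha> = sqrt d / (\<epsilon> * lam)"
    and b: "q + 2 * (d + d / \<epsilon>) + 2 * d / \<epsilon> * sqrt (T / d / lam) \<le> b"
    and R: "2 * \<alpha> * R \<le> 2 * d / \<epsilon> - 2 * d"
  shows "q + 2 * \<alpha> * sqrt T * sqrt lam < b - 2 * \<alpha> * R"
proof -
  have "2 * \<alpha> * sqrt T * sqrt lam = 2 * d / \<epsilon> * sqrt (T / d / lam)"
    using assms(1-4) by (simp add: \<alpha> real_sqrt_divide real_sqrt_mult field_simps)
  then show ?thesis using b R \<open>0 < d\<close> by (simp add: field_simps)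
qed

locale trace_normalized_barrier =
  fixes Z :: "real^'d^'d" and \<alpha> l :: real and A :: "real^'d^'d"
  assumes pd_barrier: "pd (\<alpha> *\<^sub>R Z - mat l)"
    and A_inverse_square: "A = matrix_inv ((\<alpha> *\<^sub>R Z - mat l) ** (\<alpha> *\<^sub>R Z - mat l))"
    and trace_A: "trace A = 1"
begin

abbreviation barrier where "barrier \<equiv> \<alpha> *\<^sub>R Z - mat l"

lemma A_eq: "A = matrix_inv barrier ** matrix_inv barrier"
  using matrix_inv_mult[OF pd_imp_invertible[OF pd_barrier] pd_imp_invertible[OF pd_barrier]]
  by (simp add: A_inverse_square)

lemma psd_sqrt_A: "psd_sqrt A = matrix_inv barrier"
  using psd_sqrt_matrix_inv_square[OF pd_barrier] by (simp add: A_inverse_square)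

lemma psd_inv_barrier: "psd (matrix_inv barrier)"
  by (rule pd_imp_psd_matrix_inv[OF pd_barrier])

lemma transpose_inv_barrier: "transpose (matrix_inv barrier) = matrix_inv barrier"
  using psd_inv_barrier by (simp add: psd_def sym_mat_def)

lemma barrier_mult_inv: "barrier ** matrix_inv barrier = mat 1"
  by (rule matrix_inv_cancel(1)[OF pd_imp_invertible[OF pd_barrier]])

lemma trace_inv_barrier_square: "trace (matrix_inv barrier ** matrix_inv barrier) = 1"
  using trace_A by (simp add: A_eq)

lemma mat_inner_outer_A: "mat_inner (outer w) A = (psd_sqrt A *v w) \<bullet> (psd_sqrt A *v w)"
proof -
  have "sym_mat A" by (simp add: A_eq sym_mat_def matrix_transpose_mul transpose_inv_barrier)
  then have "mat_inner (outer w) A = w \<bullet> (matrix_inv barrier *v (matrix_inv barrier *v w))"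
    by (simp add: mat_inner_outer A_eq matrix_vector_mul_assoc)
  then show ?thesis
    using psd_inv_barrier by (simp add: psd_def sym_mat_adjoint psd_sqrt_A)
qed

lemma mat_inner_outer_psd_sqrt_A: "mat_inner (outer w) (psd_sqrt A) = w \<bullet> (psd_sqrt A *v w)"
  using psd_inv_barrier by (simp add: psd_def mat_inner_outer psd_sqrt_A)

lemma mat_inner_outer_A_nonneg: "0 \<le> mat_inner (outer w) A"
  by (simp add: mat_inner_outer_A)

lemma mat_inner_outer_psd_sqrt_A_nonneg: "0 \<le> mat_inner (outer w) (psd_sqrt A)"
  unfolding mat_inner_outer_psd_sqrt_A using psd_inv_barrier by (simp add: psd_def psd_sqrt_A)

lemma mat_inner_outer_psd_sqrt_A_le:
  "mat_inner (outer w) (psd_sqrt A) \<le> norm w * sqrt (mat_inner (outer w) A)"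
  by (simp add: mat_inner_outer_psd_sqrt_A mat_inner_outer_A norm_cauchy_schwarz
      flip: norm_eq_sqrt_inner)

lemma trace_psd_sqrt_A_bounds: "0 \<le> trace (psd_sqrt A)" "trace (psd_sqrt A) \<le> sqrt CARD('d)"
  using psd_trace_nonneg[OF psd_inv_barrier] trace_le_sqrt_card_mult_trace[of "matrix_inv barrier"]
  by (simp_all add: psd_sqrt_A transpose_inv_barrier trace_inv_barrier_square)

lemma shift_le_eigenvalue:
  assumes "\<mu> \<in> eigenvalues Z"
  shows "l \<le> \<alpha> * \<mu> - 1"
proof -
  obtain w where w: "w \<noteq> 0" "Z *v w = \<mu> *\<^sub>R w" using assms by (auto simp: eigenvalues_def)
  define c where "c = \<alpha> * \<mu> - l"
  have Bw: "barrier *v w = c *\<^sub>R w"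
    using w(2) by (simp add: c_def scaleR_matrix_vector_assoc[symmetric] matrix_scaleR[symmetric]
        algebra_simps)
  have "0 < w \<bullet> (barrier *v w)" using pd_barrier w(1) by (simp add: pd_def)
  then have "0 < c" using Bw inner_ge_zero[of w] by (auto simp: zero_less_mult_iff)
  moreover have c2: "1\<^sup>2 \<le> c\<^sup>2"
    using eigenvalue_sq_mult_trace_inverse_ge_1[OF pd_imp_invertible[OF pd_barrier] w(1) Bw]
    by (simp add: transpose_inv_barrier trace_inv_barrier_square)
  ultimately have "1 \<le> c" using power2_le_imp_le[OF c2] by simp
  then show ?thesis by (simp add: c_def)
qed

lemma mat_inner_scaled_Z: "\<alpha> * mat_inner Z M = mat_inner barrier M + l * trace M"
  by (simp only: mat_inner_scaleR_left[symmetric] mat_inner_mat_left[symmetric]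
      mat_inner_add_left[symmetric] diff_add_cancel)

lemma mat_inner_Z_A: "\<alpha> * mat_inner Z A = trace (psd_sqrt A) + l"
  unfolding mat_inner_scaled_Z trace_A psd_sqrt_A
  by (simp add: mat_inner_def A_eq matrix_mul_assoc barrier_mult_inv)

lemma mat_inner_Z_psd_sqrt_A:
  "\<alpha> * mat_inner Z (psd_sqrt A) = real CARD('d) + l * trace (psd_sqrt A)"
  unfolding mat_inner_scaled_Z by (simp add: mat_inner_def barrier_mult_inv psd_sqrt_A trace_I)

lemma lambda_min_le_mat_inner_A:
  assumes "sym_mat X"
  shows "lambda_min X \<le> mat_inner X A"
  using lambda_min_mult_trace_le[OF assms, of "matrix_inv barrier"]
  by (simp add: trace_inv_barrier_square transpose_inv_barrier A_eq)

lemma mat_inner_Z_bounds: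
  assumes "sym_mat Z" and "0 < \<epsilon>" "\<epsilon> < 1/2" "0 < lam"
    and "\<alpha> = sqrt CARD('d) / (\<epsilon> * lam)" and "lambda_min Z \<le> (1 - 2 * \<epsilon>) * lam"
  shows "mat_inner Z A \<le> (1 - \<epsilon>) * lam"
    and "2 * \<alpha> * mat_inner Z (psd_sqrt A) \<le> 2 * real CARD('d) / \<epsilon> - 2 * real CARD('d)"
  using barrier_sum_bounds[OF assms(2-4) _ assms(5) trace_psd_sqrt_A_bounds
      shift_le_eigenvalue[OF lambda_min_eigenvalue_rayleigh(1)[OF assms(1)]] assms(6)
      mat_inner_Z_A mat_inner_Z_psd_sqrt_A]
  by simp_all

end

section \<open>Averaging over swaps\<close>

lemma sum_weighted_Cauchy_Schwarz:
  fixes w f g :: "'a \<Rightarrow> real"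
  assumes "\<And>i. i \<in> I \<Longrightarrow> 0 \<le> w i"
  shows "(\<Sum>i\<in>I. w i * (f i * g i)) \<le> sqrt (\<Sum>i\<in>I. w i * (f i)\<^sup>2) * sqrt (\<Sum>i\<in>I. w i * (g i)\<^sup>2)"
proof -
  have "(\<Sum>i\<in>I. (sqrt (w i) * f i) * (sqrt (w i) * g i))\<^sup>2
      \<le> (\<Sum>i\<in>I. (sqrt (w i) * f i)\<^sup>2) * (\<Sum>i\<in>I. (sqrt (w i) * g i)\<^sup>2)"
    by (rule Cauchy_Schwarz_ineq_sum)
  moreover have "(\<Sum>i\<in>I. (sqrt (w i) * f i) * (sqrt (w i) * g i)) = (\<Sum>i\<in>I. w i * (f i * g i))"
    using assms by (intro sum.cong) (auto simp: algebra_simps)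
  moreover have "(\<Sum>i\<in>I. (sqrt (w i) * h i)\<^sup>2) = (\<Sum>i\<in>I. w i * (h i)\<^sup>2)" for h
    using assms by (intro sum.cong) (auto simp: power_mult_distrib)
  ultimately have "(\<Sum>i\<in>I. w i * (f i * g i))
      \<le> sqrt ((\<Sum>i\<in>I. w i * (f i)\<^sup>2) * (\<Sum>i\<in>I. w i * (g i)\<^sup>2))"
    by (intro real_le_rsqrt) simp
  then show ?thesis by (simp add: real_sqrt_mult)
qed

lemma sum_weighted_le_sqrt_mult_sqrt:
  fixes x r \<rho> a :: "'a \<Rightarrow> real"
  assumes N: "finite N" "I \<subseteq> N" and x: "\<And>i. i \<in> N \<Longrightarrow> 0 \<le> x i"
    and a: "\<And>i. i \<in> I \<Longrightarrow> 0 \<le> a i" and r: "\<And>i. i \<in> I \<Longrightarrow> r i \<le> \<rho> i * sqrt (a i)"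
  shows "(\<Sum>i\<in>I. x i * r i) \<le> sqrt (\<Sum>i\<in>N. x i * (\<rho> i)\<^sup>2) * sqrt (\<Sum>i\<in>I. x i * a i)"
proof -
  have "(\<Sum>i\<in>I. x i * r i) \<le> (\<Sum>i\<in>I. x i * (\<rho> i * sqrt (a i)))"
    using N x r by (intro sum_mono mult_left_mono) auto
  also have "\<dots> \<le> sqrt (\<Sum>i\<in>I. x i * (\<rho> i)\<^sup>2) * sqrt (\<Sum>i\<in>I. x i * (sqrt (a i))\<^sup>2)"
    using N x by (intro sum_weighted_Cauchy_Schwarz) auto
  also have "(\<Sum>i\<in>I. x i * (sqrt (a i))\<^sup>2) = (\<Sum>i\<in>I. x i * a i)"
    using a by (intro sum.cong) auto
  also have "sqrt (\<Sum>i\<in>I. x i * (\<rho> i)\<^sup>2) * sqrt (\<Sum>i\<in>I. x i * a i)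
      \<le> sqrt (\<Sum>i\<in>N. x i * (\<rho> i)\<^sup>2) * sqrt (\<Sum>i\<in>I. x i * a i)"
    using N x a by (intro mult_right_mono real_sqrt_le_mono sum_mono2) (auto intro!: sum_nonneg)
  finally show ?thesis .
qed

lemma sum_weighted_le_of_lower_ratio:
  fixes a s x :: "'a \<Rightarrow> real"
  assumes ratio: "\<And>i. i \<in> S \<Longrightarrow> \<gamma> * (1 - s i) \<le> a i" and "0 \<le> \<gamma>"
    and s: "\<And>i. i \<in> S \<Longrightarrow> 0 \<le> s i" and x: "\<And>i. i \<in> S \<Longrightarrow> 0 \<le> x i \<and> x i \<le> 1"
  shows "\<gamma> * (card S - (\<Sum>i\<in>S. s i)) \<le> (\<Sum>i\<in>S. a i)"
    and "(\<Sum>i\<in>S. x i * a i) \<le> (\<Sum>i\<in>S. a i) - \<gamma> * (card S - (\<Sum>i\<in>S. x i)) + \<gamma> * (\<Sum>i\<in>S. s i)"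
proof -
  have "\<gamma> * (card S - (\<Sum>i\<in>S. s i)) = (\<Sum>i\<in>S. \<gamma> * (1 - s i))"
    by (simp add: sum_subtractf sum_distrib_left algebra_simps)
  also have "\<dots> \<le> (\<Sum>i\<in>S. a i)" using ratio by (rule sum_mono)
  finally show "\<gamma> * (card S - (\<Sum>i\<in>S. s i)) \<le> (\<Sum>i\<in>S. a i)" .
  have "x i * a i \<le> a i - \<gamma> * (1 - x i) + \<gamma> * s i" if "i \<in> S" for i
  proof -
    have "(1 - x i) * (\<gamma> * (1 - s i)) \<le> (1 - x i) * a i"
      using ratio[OF that] x[OF that] by (intro mult_left_mono) auto
    moreover have "(1 - x i) * (\<gamma> * s i) \<le> \<gamma> * s i"
      using x[OF that] s[OF that] \<open>0 \<le> \<gamma>\<close> by (intro mult_left_le_one_le) auto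
    ultimately show ?thesis by (simp add: algebra_simps)
  qed
  then have "(\<Sum>i\<in>S. x i * a i) \<le> (\<Sum>i\<in>S. a i - \<gamma> * (1 - x i) + \<gamma> * s i)"
    by (rule sum_mono)
  also have "\<dots> = (\<Sum>i\<in>S. a i) - \<gamma> * (card S - (\<Sum>i\<in>S. x i)) + \<gamma> * (\<Sum>i\<in>S. s i)"
    by (simp add: sum.distrib sum_subtractf sum_distrib_left algebra_simps)
  finally show "(\<Sum>i\<in>S. x i * a i) \<le> (\<Sum>i\<in>S. a i) - \<gamma> * (card S - (\<Sum>i\<in>S. x i)) + \<gamma> * (\<Sum>i\<in>S. s i)" .
qed

lemma sum_weighted_le_of_upper_ratio:
  fixes a s x :: "'a \<Rightarrow> real"
  assumes "\<And>j. j \<in> T \<Longrightarrow> a j \<le> \<kappa> * (1 + s j)" and "\<And>j. j \<in> T \<Longrightarrow> 0 \<le> x j"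
  shows "(\<Sum>j\<in>T. x j * a j) \<le> \<kappa> * ((\<Sum>j\<in>T. x j) + (\<Sum>j\<in>T. x j * s j))"
proof -
  have "(\<Sum>j\<in>T. x j * a j) \<le> (\<Sum>j\<in>T. x j * (\<kappa> * (1 + s j)))"
    using assms by (intro sum_mono mult_left_mono) auto
  also have "\<dots> = \<kappa> * ((\<Sum>j\<in>T. x j) + (\<Sum>j\<in>T. x j * s j))"
    by (simp add: sum.distrib sum_distrib_left algebra_simps)
  finally show ?thesis .
qed

lemma square_mult_affine_le:
  fixes m y q c :: real
  assumes "0 \<le> m" "m \<le> y" "0 \<le> q" "0 \<le> c"
  shows "m\<^sup>2 * (q + c * y) \<le> y\<^sup>2 * (q + c * m)"
proof -
  have "m\<^sup>2 * q \<le> y\<^sup>2 * q" using assms by (intro mult_right_mono power_mono) auto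
  moreover have "(c * m * y) * m \<le> (c * m * y) * y" using assms by (intro mult_left_mono) auto
  ultimately show ?thesis by (simp add: algebra_simps power2_eq_square)
qed

lemma le_mult_of_le_affine_sqrt:
  fixes lam M q c \<kappa> D :: real
  assumes "0 < lam" "lam < M" "0 \<le> q" "0 \<le> c" "0 \<le> \<kappa>"
    and M_le: "M \<le> \<kappa> * (q + c * sqrt M)" and D: "q + c * sqrt lam \<le> D"
  shows "lam \<le> \<kappa> * D"
proof -
  have "0 < \<kappa> * (q + c * sqrt M)" using assms by linarith
  then have pos: "0 < q + c * sqrt M" using \<open>0 \<le> \<kappa>\<close> by (simp add: zero_less_mult_iff)
  have "lam * (q + c * sqrt M) \<le> M * (q + c * sqrt lam)"
    using square_mult_affine_le[of "sqrt lam" "sqrt M" q c] assms by simp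
  also have "\<dots> \<le> M * D" using D assms by (intro mult_left_mono) auto
  also have "\<dots> \<le> \<kappa> * (q + c * sqrt M) * D"
  proof (rule mult_right_mono[OF M_le])
    have "0 \<le> c * sqrt lam" using assms by simp
    then show "0 \<le> D" using D \<open>0 \<le> q\<close> by linarith
  qed
  finally show ?thesis using pos by (simp add: mult.commute mult.left_commute)
qed

lemma le_add_gain_if_within_budget:
  fixes lam sa \<gamma> \<kappa> V W b :: real
  assumes "lam \<le> sa - \<gamma> * (b - V) + \<kappa> * W" and "V + W \<le> b" "0 \<le> V" "0 \<le> \<gamma>" "\<gamma> \<le> \<kappa>"
  shows "lam \<le> sa + (\<kappa> - \<gamma>) * b"
proof -
  have "\<gamma> * (V + W - b) \<le> 0" using assms by (intro mult_nonneg_nonpos) auto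
  moreover have "(\<kappa> - \<gamma>) * W \<le> (\<kappa> - \<gamma>) * b" using assms by (intro mult_left_mono) auto
  ultimately show ?thesis using assms(1) by (simp add: algebra_simps)
qed

lemma swap_gain_lower_bound:
  fixes a r x \<rho> :: "'a \<Rightarrow> real" and N S :: "'a set" and b :: nat and \<alpha> lam \<epsilon> q \<gamma> \<kappa> :: real
  assumes N: "finite N" "S \<subseteq> N" and card_S: "card S = b"
    and a_nonneg: "\<And>i. 0 \<le> a i" and r_nonneg: "\<And>i. 0 \<le> r i"
    and r_le: "\<And>i. r i \<le> \<rho> i * sqrt (a i)"
    and x01: "\<And>i. i \<in> N \<Longrightarrow> 0 \<le> x i \<and> x i \<le> 1" and x_sum: "(\<Sum>i\<in>N. x i) = q"
    and \<alpha>: "0 < \<alpha>" and lam: "0 < lam"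
    and sum_a_S: "(\<Sum>i\<in>S. a i) \<le> (1 - \<epsilon>) * lam"
    and lam_le: "lam \<le> (\<Sum>i\<in>N. x i * a i)"
    and b_large: "q + 2 * \<alpha> * sqrt (\<Sum>i\<in>N. x i * (\<rho> i)\<^sup>2) * sqrt lam < b - 2 * \<alpha> * (\<Sum>i\<in>S. r i)"
    and \<gamma>: "0 \<le> \<gamma>" "\<And>i. i \<in> S \<Longrightarrow> \<gamma> * (1 - 2 * \<alpha> * r i) \<le> a i"
    and \<kappa>: "\<gamma> \<le> \<kappa>" "\<And>j. j \<in> N - S \<Longrightarrow> a j \<le> \<kappa> * (1 + 2 * \<alpha> * r j)"
  shows "\<epsilon> * lam \<le> (\<kappa> - \<gamma>) * b"
proof -
  define c where "c = 2 * \<alpha> * sqrt (\<Sum>i\<in>N. x i * (\<rho> i)\<^sup>2)"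
  define RS where "RS = (\<Sum>i\<in>S. 2 * \<alpha> * r i)"
  define qS where "qS = (\<Sum>i\<in>S. x i)"
  define qO where "qO = (\<Sum>i\<in>N - S. x i)"
  define RO where "RO = (\<Sum>i\<in>N - S. x i * (2 * \<alpha> * r i))"
  define NO where "NO = (\<Sum>i\<in>N - S. x i * a i)"
  have split: "(\<Sum>i\<in>N. h i) = (\<Sum>i\<in>S. h i) + (\<Sum>i\<in>N - S. h i)" for h :: "'a \<Rightarrow> real"
    using sum.subset_diff[OF N(2,1)] by (simp add: add.commute)
  have x_S: "\<And>i. i \<in> S \<Longrightarrow> 0 \<le> x i \<and> x i \<le> 1" using x01 N(2) by auto
  have q: "q = qS + qO" using x_sum split[of x] by (simp add: qS_def qO_def)
  have "0 \<le> qS" "0 \<le> qO" "0 \<le> RS" "0 \<le> NO" "0 \<le> (\<Sum>i\<in>N. x i * (\<rho> i)\<^sup>2)"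
    using x01 N(2) \<alpha> r_nonneg a_nonneg
    by (auto simp: qS_def qO_def RS_def NO_def intro!: sum_nonneg)
  then have "0 \<le> c" using \<alpha> by (simp add: c_def)
  have budget: "q + c * sqrt lam < b - RS"
    using b_large by (simp add: c_def RS_def sum_distrib_left)
  have gamma_D: "\<gamma> * (b - RS) \<le> (\<Sum>i\<in>S. a i)"
    and inside: "(\<Sum>i\<in>S. x i * a i) \<le> (\<Sum>i\<in>S. a i) - \<gamma> * (b - qS) + \<gamma> * RS"
    using sum_weighted_le_of_lower_ratio[of S \<gamma> "\<lambda>i. 2 * \<alpha> * r i" a x] \<gamma> x_S \<alpha> r_nonneg card_S
    by (simp_all add: RS_def qS_def)
  have outside: "NO \<le> \<kappa> * (qO + RO)"
    using sum_weighted_le_of_upper_ratio[of "N - S" a \<kappa> "\<lambda>i. 2 * \<alpha> * r i" x] \<kappa>(2) x01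
    by (simp add: NO_def qO_def RO_def)
  have "RO = 2 * \<alpha> * (\<Sum>i\<in>N - S. x i * r i)" by (simp add: RO_def sum_distrib_left algebra_simps)
  then have RO_le: "RO \<le> c * sqrt NO"
    using sum_weighted_le_sqrt_mult_sqrt[of N "N - S" x a r \<rho>] N x01 a_nonneg r_le \<alpha>
      mult_left_mono[of _ _ "2 * \<alpha>"] by (simp add: NO_def c_def mult.assoc)
  text \<open>Either the outside mass NO is at most lam, and then all weights fit into the budget b,
    or it exceeds lam, and then the outside ratio bound alone gives lam \<le> \<kappa> (b - RS).\<close>
  consider "NO \<le> lam" | "lam < NO" by linarith
  then show ?thesis
  proof cases
    case 1
    then have "RO \<le> c * sqrt lam"
      using RO_le mult_left_mono[of "sqrt NO" "sqrt lam" c] \<open>0 \<le> c\<close> by simp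
    then have "qS + RS + (qO + RO) \<le> b" using budget q by linarith
    moreover have "lam \<le> (\<Sum>i\<in>S. a i) - \<gamma> * (b - (qS + RS)) + \<kappa> * (qO + RO)"
      using lam_le split[of "\<lambda>i. x i * a i"] inside outside by (simp add: NO_def algebra_simps)
    ultimately have "lam \<le> (\<Sum>i\<in>S. a i) + (\<kappa> - \<gamma>) * b"
      using le_add_gain_if_within_budget \<open>0 \<le> qS\<close> \<open>0 \<le> RS\<close> \<gamma>(1) \<kappa>(1) by simp
    then show ?thesis using sum_a_S by (simp add: algebra_simps)
  next
    case 2
    have "\<kappa> * (qO + RO) \<le> \<kappa> * (q + c * sqrt NO)"
      using RO_le q \<open>0 \<le> qS\<close> \<gamma>(1) \<kappa>(1) by (intro mult_left_mono) auto
    then have "lam \<le> \<kappa> * (b - RS)"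
      using le_mult_of_le_affine_sqrt[of lam NO q c \<kappa> "b - RS"] outside lam 2 budget q
        \<open>0 \<le> qS\<close> \<open>0 \<le> qO\<close> \<open>0 \<le> c\<close> \<gamma>(1) \<kappa>(1) by simp
    then have "\<epsilon> * lam \<le> (\<kappa> - \<gamma>) * (b - RS)" using gamma_D sum_a_S by (simp add: algebra_simps)
    also have "\<dots> \<le> (\<kappa> - \<gamma>) * b" using \<open>0 \<le> RS\<close> \<kappa>(1) by (intro mult_left_mono) auto
    finally show ?thesis .
  qed
qed

lemma exists_lt_one_if_sum_lt_card:
  fixes f :: "'a \<Rightarrow> real"
  assumes "(\<Sum>i\<in>S. f i) < card S"
  shows "\<exists>i\<in>S. f i < 1"
proof (rule ccontr)
  assume "\<not> ?thesis"
  then have "(\<Sum>i\<in>S. 1) \<le> (\<Sum>i\<in>S. f i)" by (intro sum_mono) (simp add: not_less)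
  then show False using assms by simp
qed

lemma mult_le_if_le_divide_pos:
  fixes \<gamma> a t :: real
  assumes "0 \<le> \<gamma>" "0 \<le> a" "0 < t \<Longrightarrow> \<gamma> \<le> a / t"
  shows "\<gamma> * t \<le> a"
proof (cases "0 < t")
  case True
  then show ?thesis using assms(3) by (simp add: pos_le_divide_eq)
next
  case False
  then have "\<gamma> * t \<le> 0" using assms(1) by (simp add: mult_nonneg_nonpos)
  then show ?thesis using assms(2) by linarith
qed

lemma exists_swap_with_gain:
  fixes a r x \<rho> :: "'a \<Rightarrow> real" and N S :: "'a set" and b :: nat and \<alpha> lam \<epsilon> q :: real
  assumes N: "finite N" "S \<subseteq> N" and card_S: "card S = b"
    and a_nonneg: "\<And>i. 0 \<le> a i" and r_nonneg: "\<And>i. 0 \<le> r i"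
    and r_le: "\<And>i. r i \<le> \<rho> i * sqrt (a i)"
    and x01: "\<And>i. i \<in> N \<Longrightarrow> 0 \<le> x i \<and> x i \<le> 1" and x_sum: "(\<Sum>i\<in>N. x i) = q"
    and \<alpha>: "0 < \<alpha>" and lam: "0 < lam" and \<epsilon>: "0 < \<epsilon>"
    and sum_a_S: "(\<Sum>i\<in>S. a i) \<le> (1 - \<epsilon>) * lam"
    and lam_le: "lam \<le> (\<Sum>i\<in>N. x i * a i)"
    and b_large: "q + 2 * \<alpha> * sqrt (\<Sum>i\<in>N. x i * (\<rho> i)\<^sup>2) * sqrt lam < b - 2 * \<alpha> * (\<Sum>i\<in>S. r i)"
  shows "\<exists>i\<in>{i\<in>S. 2 * \<alpha> * r i < 1}. \<exists>j\<in>N - S.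
           \<epsilon> / b * lam \<le> a j / (1 + 2 * \<alpha> * r j) - a i / (1 - 2 * \<alpha> * r i)"
proof -
  define S' where "S' = {i\<in>S. 2 * \<alpha> * r i < 1}"
  define g where "g i = a i / (1 - 2 * \<alpha> * r i)" for i
  define f where "f j = a j / (1 + 2 * \<alpha> * r j)" for j
  have "0 \<le> q" "0 \<le> (\<Sum>i\<in>N. x i * (\<rho> i)\<^sup>2)" using x_sum x01 by (auto intro!: sum_nonneg)
  then have "0 \<le> q + 2 * \<alpha> * sqrt (\<Sum>i\<in>N. x i * (\<rho> i)\<^sup>2) * sqrt lam" using \<alpha> lam by simp
  moreover have "(\<Sum>i\<in>S. 2 * \<alpha> * r i) = 2 * \<alpha> * (\<Sum>i\<in>S. r i)" by (simp add: sum_distrib_left)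
  ultimately have b_gt: "(\<Sum>i\<in>S. 2 * \<alpha> * r i) < b" using b_large by linarith
  then have "S' \<noteq> {}"
    using exists_lt_one_if_sum_lt_card[of "\<lambda>i. 2 * \<alpha> * r i" S] card_S by (auto simp: S'_def)
  moreover have "finite S'" using finite_subset[OF N(2,1)] by (simp add: S'_def)
  ultimately have "Min (g ` S') \<in> g ` S'" by simp
  then obtain i where i: "i \<in> S'" "Min (g ` S') = g i" by blast
  have "0 \<le> g i" using i a_nonneg[of i] by (simp add: g_def S'_def)
  text \<open>Inserting g i keeps the maximum defined when N - S is empty.\<close>
  define \<kappa> where "\<kappa> = Max (insert (g i) (f ` (N - S)))"
  have "finite (N - S)" using N by simp
  then have "g i \<le> \<kappa>" and f_le: "\<And>j. j \<in> N - S \<Longrightarrow> f j \<le> \<kappa>" by (simp_all add: \<kappa>_def)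
  have "\<epsilon> * lam \<le> (\<kappa> - g i) * b"
  proof (rule swap_gain_lower_bound[OF N card_S a_nonneg r_nonneg r_le x01 x_sum \<alpha> lam sum_a_S
        lam_le b_large \<open>0 \<le> g i\<close> _ \<open>g i \<le> \<kappa>\<close>])
    show "g i * (1 - 2 * \<alpha> * r i') \<le> a i'" if "i' \<in> S" for i'
    proof (rule mult_le_if_le_divide_pos[OF \<open>0 \<le> g i\<close> a_nonneg])
      assume "0 < 1 - 2 * \<alpha> * r i'"
      then have "i' \<in> S'" using that by (simp add: S'_def)
      then have "g i \<le> g i'" using Min_le[of "g ` S'" "g i'"] i \<open>finite S'\<close> by simp
      then show "g i \<le> a i' / (1 - 2 * \<alpha> * r i')" by (simp add: g_def)
    qed
    show "a j \<le> \<kappa> * (1 + 2 * \<alpha> * r j)" if "j \<in> N - S" for j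
      using f_le[OF that] \<alpha> r_nonneg[of j] by (simp add: f_def divide_le_eq add_pos_nonneg)
  qed
  moreover have "0 < real b" using b_gt sum_nonneg[of S "\<lambda>i. 2 * \<alpha> * r i"] \<alpha> r_nonneg by simp
  ultimately have gain: "\<epsilon> / b * lam \<le> \<kappa> - g i" by (simp add: field_simps)
  moreover have "0 < \<epsilon> / b * lam" using \<epsilon> lam \<open>0 < real b\<close> by simp
  ultimately have "\<kappa> \<in> f ` (N - S)"
    using Max_in[of "insert (g i) (f ` (N - S))"] \<open>finite (N - S)\<close> by (auto simp: \<kappa>_def)
  then obtain j where "j \<in> N - S" "f j = \<kappa>" by blast
  then show ?thesis using i gain unfolding S'_def f_def g_def by blast
qed

theorem proposition3p12:
  fixes v :: "nat \<Rightarrow> real^'d"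
    and n b :: nat
    and x :: "nat \<Rightarrow> real"
    and q \<epsilon> \<alpha> l :: real
    and X Z A :: "real^'d^'d"
    and S S' :: "nat set"
    and \<Phi> :: "nat \<Rightarrow> nat \<Rightarrow> real"
  assumes x_range: "\<forall>i\<in>{..<n}. 0 \<le> x i \<and> x i \<le> 1"
    and x_sum: "(\<Sum>i<n. x i) = q"
    and X_def: "X = (\<Sum>i<n. x i *\<^sub>R outer (v i))"
    and X_pos: "lambda_min X > 0"
    and S_sub: "S \<subseteq> {..<n}"
    and S_card: "card S = b"
    and Z_def: "Z = (\<Sum>i\<in>S. outer (v i))"
    and eps: "0 < \<epsilon>" "\<epsilon> < 1/2"
    and alpha_def: "\<alpha> = sqrt (real CARD('d)) / (\<epsilon> * lambda_min X)"
    and ell_pd: "pd (\<alpha> *\<^sub>R Z - mat l)"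
    and A_def: "A = matrix_inv ((\<alpha> *\<^sub>R Z - mat l) ** (\<alpha> *\<^sub>R Z - mat l))"
    and ell_tr: "trace A = 1"
    and S'_def: "S' = {i\<in>S. 2 * \<alpha> * mat_inner (outer (v i)) (psd_sqrt A) < 1}"
    and Phi_def: "\<And>i j. \<Phi> i j =
        mat_inner (outer (v j)) A / (1 + 2 * \<alpha> * mat_inner (outer (v j)) (psd_sqrt A))
      - mat_inner (outer (v i)) A / (1 - 2 * \<alpha> * mat_inner (outer (v i)) (psd_sqrt A))"
    and Z_small: "lambda_min Z \<le> (1 - 2 * \<epsilon>) * lambda_min X"
    and b_large: "real b \<ge> q + 2 * (real CARD('d) + real CARD('d) / \<epsilon>)
        + 2 * real CARD('d) / \<epsilon> * sqrt (lambda_avg X / lambda_min X)"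
  shows "\<exists>i\<in>S'. \<exists>j\<in>{..<n} - S. \<Phi> i j \<ge> \<epsilon> / real b * lambda_min X"
proof -
  interpret trace_normalized_barrier Z \<alpha> l A
    using ell_pd A_def ell_tr by unfold_locales
  define a where "a i = mat_inner (outer (v i)) A" for i
  define r where "r i = mat_inner (outer (v i)) (psd_sqrt A)" for i
  have "sym_mat X" "sym_mat Z"
    unfolding X_def Z_def by (intro sym_mat_sum sym_mat_scaleR sym_mat_outer)+
  from mat_inner_Z_bounds[OF \<open>sym_mat Z\<close> eps X_pos alpha_def Z_small]
  have S_bounds: "(\<Sum>i\<in>S. a i) \<le> (1 - \<epsilon>) * lambda_min X"
      "2 * \<alpha> * (\<Sum>i\<in>S. r i) \<le> 2 * real CARD('d) / \<epsilon> - 2 * real CARD('d)"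
    by (simp_all add: a_def r_def Z_def mat_inner_sum_left)
  have lam_le: "lambda_min X \<le> (\<Sum>i<n. x i * a i)"
    using lambda_min_le_mat_inner_A[OF \<open>sym_mat X\<close>]
    by (simp add: X_def mat_inner_sum_left mat_inner_scaleR_left a_def)
  have trace_X: "trace X = (\<Sum>i<n. x i * (norm (v i))\<^sup>2)" by (simp add: X_def trace_sum_outer)
  then have "0 \<le> trace X" using x_range by (auto intro!: sum_nonneg)
  have budget: "q + 2 * \<alpha> * sqrt (\<Sum>i<n. x i * (norm (v i))\<^sup>2) * sqrt (lambda_min X)
      < b - 2 * \<alpha> * (\<Sum>i\<in>S. r i)"
    using budget_of_size_bound[OF eps(1) X_pos _ \<open>0 \<le> trace X\<close> alpha_def
        b_large[unfolded lambda_avg_def] S_bounds(2)] by (simp add: trace_X)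
  have "\<exists>i\<in>{i\<in>S. 2 * \<alpha> * r i < 1}. \<exists>j\<in>{..<n} - S.
      \<epsilon> / b * lambda_min X \<le> a j / (1 + 2 * \<alpha> * r j) - a i / (1 - 2 * \<alpha> * r i)"
    using x_range
    by (intro exists_swap_with_gain[OF finite_lessThan S_sub S_card _ _ _ _ x_sum _ X_pos eps(1)
          S_bounds(1) lam_le budget])
      (auto simp: a_def r_def mat_inner_outer_A_nonneg mat_inner_outer_psd_sqrt_A_nonneg
        mat_inner_outer_psd_sqrt_A_le alpha_def eps X_pos)
  then show ?thesis unfolding S'_def Phi_def a_def r_def .
qed

end
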